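(* Let $k\ge2$. Consider smoothed LocalMax-$k$-Cut on a graph $G=(V,E)$ with $n=|V|$, $m=|E|$ and maximum degree $\Delta(G)$, where the edge weights are drawn independently from distributions with densities $[-1,1]\to[0,\phi]$. Then the expected maximum number of iterations of local search under the Flip neighbourhood (over all initial partitions and all improving sequences) is $O(3^{\Delta(G)}nm^2\phi)$, with a hidden constant independent of $k$.
   Context: LocalMax-$k$-Cut: given a weighted undirected graph $G=(V,E)$ with weights $w_e$, a $k$-cut is a partition $(V_1,\dots,V_k)$ of $V$, with weight equal to the sum of weights of edges whose endpoints lie in different blocks; the Flip neighbours of a partition are those obtained by moving a single vertex from its block to another block; a solution is a partition with no neighbour of strictly larger weight. Local search repeatedly moves to a strictly better neighbour. *)

theory Defs
  imports "HOL-Probability.Probability"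
begin

definition simple_graph :: "nat set \<Rightarrow> nat set set \<Rightarrow> bool" where
  "simple_graph V E \<longleftrightarrow> finite V \<and> (\<forall>e\<in>E. e \<subseteq> V \<and> card e = 2)"

definition max_degree :: "nat set \<Rightarrow> nat set set \<Rightarrow> nat" where
  "max_degree V E = (if V = {} then 0 else Max ((\<lambda>v. card {e\<in>E. v \<in> e}) ` V))"

text \<open>A k-cut (V_1,...,V_k) is encoded by the block-index map V -> {0..<k}.\<close>
definition kpartitions :: "nat \<Rightarrow> nat set \<Rightarrow> (nat \<Rightarrow> nat) set" where
  "kpartitions k V = (V \<rightarrow>\<^sub>E {..<k})"

definition cut_edge :: "(nat \<Rightarrow> nat) \<Rightarrow> nat set \<Rightarrow> bool" where
  "cut_edge p e \<longleftrightarrow> (\<exists>u\<in>e. \<exists>v\<in>e. p u \<noteq> p v)"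

definition cut_weight :: "nat set set \<Rightarrow> (nat set \<Rightarrow> real) \<Rightarrow> (nat \<Rightarrow> nat) \<Rightarrow> real" where
  "cut_weight E w p = (\<Sum>e\<in>E. if cut_edge p e then w e else 0)"

definition flip_nbr :: "nat \<Rightarrow> nat set \<Rightarrow> (nat \<Rightarrow> nat) \<Rightarrow> (nat \<Rightarrow> nat) \<Rightarrow> bool" where
  "flip_nbr k V p q \<longleftrightarrow> (\<exists>v\<in>V. \<exists>j<k. j \<noteq> p v \<and> q = p(v := j))"

definition improving_seq ::
  "nat \<Rightarrow> nat set \<Rightarrow> nat set set \<Rightarrow> (nat set \<Rightarrow> real) \<Rightarrow> (nat \<Rightarrow> (nat \<Rightarrow> nat)) \<Rightarrow> nat \<Rightarrow> bool" where
  "improving_seq k V E w ps L \<longleftrightarrow> ps 0 \<in> kpartitions k V \<and>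
     (\<forall>i<L. flip_nbr k V (ps i) (ps (Suc i)) \<and> cut_weight E w (ps (Suc i)) > cut_weight E w (ps i))"

text \<open>Maximum number of local-search iterations over all initial partitions and all
  improving sequences (always a finite maximum, since the cut weight strictly increases
  along an improving sequence and there are finitely many partitions).\<close>
definition max_iterations :: "nat \<Rightarrow> nat set \<Rightarrow> nat set set \<Rightarrow> (nat set \<Rightarrow> real) \<Rightarrow> nat" where
  "max_iterations k V E w = Sup {L. \<exists>ps. improving_seq k V E w ps L}"

definition bounded_density :: "real \<Rightarrow> (real \<Rightarrow> real) \<Rightarrow> bool" where
  "bounded_density \<phi> f \<longleftrightarrow> f \<in> borel_measurable borel \<and>
     (\<forall>x. 0 \<le> f x \<and> f x \<le> \<phi>) \<and> (\<forall>x. x \<notin> {-1..1} \<longrightarrow> f x = 0) \<and>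
     (\<integral>\<^sup>+ x. ennreal (f x) \<partial>lborel) = 1"

definition weight_distr :: "nat set set \<Rightarrow> (nat set \<Rightarrow> real \<Rightarrow> real) \<Rightarrow> (nat set \<Rightarrow> real) measure" where
  "weight_distr E f = (\<Pi>\<^sub>M e\<in>E. density lborel (\<lambda>x. ennreal (f e x)))"

end

theory Submission
  imports Defs
begin

text \<open>A Flip move of a vertex v changes the cut weight by a linear form
  sum_e c(e) w(e) whose coefficients lie in {-1,0,1} and vanish off the edges at v,
  so at most n 3^Delta such forms occur. Along an improving sequence of length T the
  total gain is at most m, hence some form takes a value in (0, m/T]. As T < 2^m,
  dyadic rounding gives T <= sum_c sum_(j<m) 2^j [0 < X_c <= m/2^j], and each of these
  events has probability at most phi m/2^j, because one weight with coefficient +-1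
  has density at most phi. Summing gives E[T] <= n 3^Delta m^2 phi.\<close>

section \<open>Interval probabilities of linear forms in independent weights\<close>

lemma prob_space_density_bounded:
  assumes "bounded_density \<phi> g"
  shows "prob_space (density lborel (\<lambda>x. ennreal (g x)))"
  using assms by (intro prob_spaceI) (simp add: emeasure_density bounded_density_def)

lemma nn_integral_density_interval_le:
  fixes g :: "real \<Rightarrow> real"
  assumes g: "g \<in> borel_measurable borel" "\<And>x. 0 \<le> g x" "\<And>x. g x \<le> \<phi>"
    and c: "c \<in> {-1, 1}" and b: "0 \<le> b"
  shows "(\<integral>\<^sup>+ y. indicator {0<..b} (c * y + s) \<partial>density lborel (\<lambda>x. ennreal (g x)))
    \<le> ennreal (\<phi> * b)"
proof -
  have interval_length: "(\<integral>\<^sup>+ y. indicator {0<..b} (c * y + s) \<partial>lborel) = ennreal b"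
  proof (cases "c = 1")
    case True
    then have "(\<lambda>y. indicator {0<..b} (c * y + s) :: ennreal) = indicator {-s<..b-s}"
      by (auto simp: indicator_def fun_eq_iff)
    then show ?thesis using b by simp
  next
    case False
    with c have "(\<lambda>y. indicator {0<..b} (c * y + s) :: ennreal) = indicator {s-b..<s}"
      by (auto simp: indicator_def fun_eq_iff)
    then show ?thesis using b by simp
  qed
  have "(\<integral>\<^sup>+ y. indicator {0<..b} (c * y + s) \<partial>density lborel (\<lambda>x. ennreal (g x)))
      = (\<integral>\<^sup>+ y. ennreal (g y) * indicator {0<..b} (c * y + s) \<partial>lborel)"
    using g(1) by (subst nn_integral_density) auto
  also have "\<dots> \<le> (\<integral>\<^sup>+ y. ennreal \<phi> * indicator {0<..b} (c * y + s) \<partial>lborel)"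
    by (intro nn_integral_mono mult_right_mono) (auto simp: g(3) ennreal_leI)
  also have "\<dots> = ennreal \<phi> * ennreal b"
    by (subst nn_integral_cmult) (auto simp: interval_length)
  finally show ?thesis
    using b g(2,3)[of 0] by (simp add: ennreal_mult)
qed

lemma borel_measurable_linear_form_PiM:
  fixes N :: "'i \<Rightarrow> real measure"
  assumes "\<And>i. sets (N i) = sets borel"
  shows "(\<lambda>w. \<Sum>e\<in>E. c e * w e) \<in> borel_measurable (PiM E N)"
proof -
  have "(\<lambda>w. w e) \<in> borel_measurable (PiM E N)" if "e \<in> E" for e
    using measurable_component_singleton[OF that, of N]
      measurable_cong_sets[OF refl assms[of e]] by blast
  then show ?thesis by (intro borel_measurable_sum borel_measurable_times) auto
qed

text \<open>Only the coordinate \<open>e\<^sub>0\<close> is integrated; by Fubini the other weights merely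
  shift the interval.\<close>

lemma nn_integral_PiM_linear_form_interval_le:
  fixes N :: "'i \<Rightarrow> real measure"
  assumes E: "finite E" "e\<^sub>0 \<in> E" and c: "c e\<^sub>0 \<in> {-1, 1}"
    and N: "\<And>i. prob_space (N i)" "\<And>i. sets (N i) = sets borel"
    and Ne: "N e\<^sub>0 = density lborel (\<lambda>x. ennreal (g x))"
    and g: "g \<in> borel_measurable borel" "\<And>x. 0 \<le> g x" "\<And>x. g x \<le> \<phi>"
    and b: "0 \<le> b"
  shows "(\<integral>\<^sup>+ w. indicator {0<..b} (\<Sum>e\<in>E. c e * w e) \<partial>PiM E N) \<le> ennreal (\<phi> * b)"
proof -
  interpret product_prob_space N UNIV
    using N(1) by (simp add: product_prob_space_def product_prob_space_axioms_def
        product_sigma_finite_def prob_space_imp_sigma_finite)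
  have E_insert: "E = insert e\<^sub>0 (E - {e\<^sub>0})" using E by auto
  have "(\<lambda>w. indicator {0<..b} (\<Sum>e\<in>E. c e * w e) :: ennreal)
      \<in> borel_measurable (PiM (insert e\<^sub>0 (E - {e\<^sub>0})) N)"
    unfolding E_insert[symmetric]
    by (rule measurable_compose[OF borel_measurable_linear_form_PiM[OF N(2)]]) simp
  from product_nn_integral_insert[OF _ _ this] E
  have "(\<integral>\<^sup>+ w. indicator {0<..b} (\<Sum>e\<in>E. c e * w e) \<partial>PiM E N)
     = (\<integral>\<^sup>+ x. (\<integral>\<^sup>+ y. indicator {0<..b} (\<Sum>e\<in>E. c e * (x(e\<^sub>0 := y)) e) \<partial>N e\<^sub>0)
          \<partial>PiM (E - {e\<^sub>0}) N)"
    by (simp add: insert_absorb)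
  also have "\<dots> \<le> (\<integral>\<^sup>+ x. ennreal (\<phi> * b) \<partial>PiM (E - {e\<^sub>0}) N)"
  proof (rule nn_integral_mono)
    fix x
    have "(\<Sum>e\<in>E. c e * (x(e\<^sub>0 := y)) e) = c e\<^sub>0 * y + (\<Sum>e\<in>E - {e\<^sub>0}. c e * x e)" for y
      using E by (simp add: sum.remove)
    then show "(\<integral>\<^sup>+ y. indicator {0<..b} (\<Sum>e\<in>E. c e * (x(e\<^sub>0 := y)) e) \<partial>N e\<^sub>0)
        \<le> ennreal (\<phi> * b)"
      using nn_integral_density_interval_le[OF g c b] Ne by simp
  qed
  also have "\<dots> = ennreal (\<phi> * b)"
    using prob_space.emeasure_space_1[OF prob_space_PiM[of "E - {e\<^sub>0}" N, OF N(1)]] by simp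
  finally show ?thesis .
qed

lemma nn_integral_PiM_signed_form_interval_le:
  fixes N :: "'i \<Rightarrow> real measure"
  assumes E: "finite E" and c: "\<And>e. c e \<in> {-1, 0, 1}"
    and N: "\<And>i. prob_space (N i)" "\<And>i. sets (N i) = sets borel"
    and Ne: "\<And>e. e \<in> E \<Longrightarrow> N e = density lborel (\<lambda>x. ennreal (f e x))"
    and f: "\<forall>e\<in>E. bounded_density \<phi> (f e)" and b: "0 \<le> b"
  shows "(\<integral>\<^sup>+ w. indicator {0<..b} (\<Sum>e\<in>E. c e * w e) \<partial>PiM E N) \<le> ennreal (\<phi> * b)"
proof (cases "\<exists>e\<^sub>0\<in>E. c e\<^sub>0 \<noteq> 0")
  case True
  then obtain e\<^sub>0 where e\<^sub>0: "e\<^sub>0 \<in> E" "c e\<^sub>0 \<in> {-1, 1}" using c by blast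
  with f have "f e\<^sub>0 \<in> borel_measurable borel" "\<And>x. 0 \<le> f e\<^sub>0 x" "\<And>x. f e\<^sub>0 x \<le> \<phi>"
    unfolding bounded_density_def by auto
  from nn_integral_PiM_linear_form_interval_le
    [where c=c and N=N and g="f e\<^sub>0", OF E e\<^sub>0 N Ne[OF e\<^sub>0(1)] this b]
  show ?thesis .
next
  case False
  then have "(\<lambda>w. indicator {0<..b} (\<Sum>e\<in>E. c e * w e) :: ennreal) = (\<lambda>w. 0)" by auto
  then show ?thesis by simp
qed

lemma AE_PiM_bounded_density_abs_le_1:
  fixes N :: "'i \<Rightarrow> real measure"
  assumes E: "finite E" and N: "\<And>i. prob_space (N i)"
    and Ne: "\<And>e. e \<in> E \<Longrightarrow> N e = density lborel (\<lambda>x. ennreal (f e x))"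
    and f: "\<forall>e\<in>E. bounded_density \<phi> (f e)"
  shows "AE w in PiM E N. \<forall>e\<in>E. \<bar>w e\<bar> \<le> 1"
proof (rule eventually_ball_finite[OF E], intro ballI)
  fix e assume e: "e \<in> E"
  with f have "(\<lambda>x. ennreal (f e x)) \<in> borel_measurable lborel"
    and "\<And>x. 0 < f e x \<Longrightarrow> \<bar>x\<bar> \<le> 1"
    unfolding bounded_density_def by (auto simp: abs_le_iff) (metis atLeastAtMost_iff less_irrefl)+
  then have "AE x in N e. \<bar>x\<bar> \<le> 1"
    unfolding Ne[OF e] by (subst AE_density) (auto intro: AE_I2)
  then show "AE w in PiM E N. \<bar>w e\<bar> \<le> 1" by (rule AE_PiM_component[OF N e])
qed

section \<open>Cut weight gains of Flip moves\<close>

definition cut_indicator :: "(nat \<Rightarrow> nat) \<Rightarrow> nat set \<Rightarrow> real" where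
  "cut_indicator p e = (if cut_edge p e then 1 else 0)"

lemma cut_weight_eq_sum_cut_indicator: "cut_weight E w p = (\<Sum>e\<in>E. cut_indicator p e * w e)"
  unfolding cut_weight_def cut_indicator_def by (intro sum.cong) auto

lemma cut_weight_diff_eq:
  "cut_weight E w q - cut_weight E w p = (\<Sum>e\<in>E. (cut_indicator q e - cut_indicator p e) * w e)"
  by (simp add: cut_weight_eq_sum_cut_indicator left_diff_distrib sum_subtractf)

lemma cut_weight_diff_le_card:
  assumes "\<forall>e\<in>E. \<bar>w e\<bar> \<le> 1"
  shows "cut_weight E w q - cut_weight E w p \<le> real (card E)"
proof -
  have "(cut_indicator q e - cut_indicator p e) * w e \<le> 1" if "e \<in> E" for e
    using assms that unfolding cut_indicator_def by auto
  then have "(\<Sum>e\<in>E. (cut_indicator q e - cut_indicator p e) * w e) \<le> (\<Sum>e\<in>E. 1)"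
    by (rule sum_mono)
  then show ?thesis by (simp add: cut_weight_diff_eq)
qed

definition incident_edges :: "nat set set \<Rightarrow> nat \<Rightarrow> nat set set" where
  "incident_edges E v = {e\<in>E. v \<in> e}"

definition flip_gain_forms :: "nat set \<Rightarrow> nat set set \<Rightarrow> (nat set \<Rightarrow> real) set" where
  "flip_gain_forms V E = (\<Union>v\<in>V. (\<lambda>s e. if e \<in> incident_edges E v then s e else 0) `
     (incident_edges E v \<rightarrow>\<^sub>E {-1, 0, 1}))"

lemma flip_gain_forms_range:
  assumes "c \<in> flip_gain_forms V E"
  shows "c e \<in> {-1, 0, 1}"
proof -
  from assms obtain v s where "s \<in> incident_edges E v \<rightarrow>\<^sub>E {-1, 0, 1}"
    and "c = (\<lambda>e. if e \<in> incident_edges E v then s e else 0)"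
    unfolding flip_gain_forms_def by blast
  then show ?thesis by (cases "e \<in> incident_edges E v") (auto dest: PiE_mem)
qed

lemma finite_simple_graph_edges: "simple_graph V E \<Longrightarrow> finite E"
  unfolding simple_graph_def by (meson PowI finite_Pow_iff finite_subset subsetI)

lemma finite_flip_gain_forms:
  assumes "simple_graph V E"
  shows "finite (flip_gain_forms V E)"
  using assms finite_simple_graph_edges[OF assms]
  unfolding simple_graph_def flip_gain_forms_def incident_edges_def
  by (auto intro!: finite_PiE)

lemma card_flip_gain_forms_le:
  assumes "simple_graph V E"
  shows "card (flip_gain_forms V E) \<le> card V * 3 ^ max_degree V E"
proof -
  have V: "finite V" using assms unfolding simple_graph_def by auto
  have Ev: "finite (incident_edges E v)" for v
    using finite_simple_graph_edges[OF assms] unfolding incident_edges_def by auto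
  have "card ((\<lambda>s e. if e \<in> incident_edges E v then s e else 0) `
      (incident_edges E v \<rightarrow>\<^sub>E {-1, 0, 1 :: real})) \<le> 3 ^ max_degree V E" if v: "v \<in> V" for v
  proof -
    have "card (incident_edges E v) \<le> max_degree V E"
      unfolding max_degree_def incident_edges_def using v V by (auto intro!: Max_ge)
    then have "card (incident_edges E v \<rightarrow>\<^sub>E {-1, 0, 1 :: real}) \<le> 3 ^ max_degree V E"
      by (simp add: card_PiE Ev numeral_3_eq_3 power_increasing)
    then show ?thesis by (meson Ev card_image_le finite_PiE finite.intros order_trans)
  qed
  then have "card (flip_gain_forms V E) \<le> (\<Sum>v\<in>V. 3 ^ max_degree V E)"
    unfolding flip_gain_forms_def by (intro card_UN_le[OF V, THEN order_trans] sum_mono)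
  then show ?thesis by simp
qed

lemma flip_nbr_gain_in_flip_gain_forms:
  assumes "flip_nbr k V p q"
  obtains c where "c \<in> flip_gain_forms V E"
    and "cut_weight E w q - cut_weight E w p = (\<Sum>e\<in>E. c e * w e)"
proof -
  obtain v j where v: "v \<in> V" and q: "q = p(v := j)"
    using assms unfolding flip_nbr_def by blast
  define s where "s = restrict (\<lambda>e. cut_indicator q e - cut_indicator p e) (incident_edges E v)"
  define c where "c e = (if e \<in> incident_edges E v then s e else 0)" for e
  have "s \<in> incident_edges E v \<rightarrow>\<^sub>E {-1, 0, 1}"
    unfolding s_def cut_indicator_def by auto
  then have "c \<in> flip_gain_forms V E"
    unfolding flip_gain_forms_def c_def using v by blast
  moreover have "c e = cut_indicator q e - cut_indicator p e" if "e \<in> E" for e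
  proof (cases "v \<in> e")
    case False
    then have "cut_edge q e = cut_edge p e"
      unfolding q cut_edge_def by (metis fun_upd_other)
    with False show ?thesis unfolding c_def incident_edges_def cut_indicator_def by simp
  qed (use that in \<open>simp add: c_def s_def incident_edges_def\<close>)
  ultimately show ?thesis
    using that by (simp add: cut_weight_diff_eq)
qed

section \<open>Length of improving sequences\<close>

lemma improving_seq_cut_weight_less:
  assumes "improving_seq k V E w ps L" "i < j" "j \<le> L"
  shows "cut_weight E w (ps i) < cut_weight E w (ps j)"
  using assms(2,3)
proof (induction j)
  case (Suc j)
  have "cut_weight E w (ps j) < cut_weight E w (ps (Suc j))"
    using assms(1) Suc.prems unfolding improving_seq_def by auto
  with Suc show ?case by (cases "i = j") auto
qed simp

text \<open>The cut weight is determined by the set of cut edges, so the partitions of an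
  improving sequence have pairwise distinct sets of cut edges.\<close>

lemma improving_seq_length_less:
  assumes E: "finite E" and seq: "improving_seq k V E w ps L"
  shows "L < 2 ^ card E"
proof -
  let ?cut = "\<lambda>i. {e\<in>E. cut_edge (ps i) e}"
  have cut_weight_eq: "cut_weight E w p = (\<Sum>e\<in>{e\<in>E. cut_edge p e}. w e)" for p
    unfolding cut_weight_def using E by (simp add: sum.inter_filter)
  have "inj_on ?cut {..L}"
  proof (rule inj_onI, rule ccontr)
    fix i j assume "i \<in> {..L}" "j \<in> {..L}" "?cut i = ?cut j" "i \<noteq> j"
    then have "cut_weight E w (ps i) \<noteq> cut_weight E w (ps j)"
      using improving_seq_cut_weight_less[OF seq] by (fastforce simp: neq_iff)
    with \<open>?cut i = ?cut j\<close> show False by (simp add: cut_weight_eq)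
  qed
  then have "card {..L} \<le> card (Pow E)"
    using E by (intro card_inj_on_le) auto
  then show ?thesis using E by (simp add: card_Pow)
qed

lemma
  assumes E: "finite E" and k: "0 < k"
  shows improving_seq_max_iterations: "\<exists>ps. improving_seq k V E w ps (max_iterations k V E w)"
    and max_iterations_less: "max_iterations k V E w < 2 ^ card E"
proof -
  let ?S = "{L. \<exists>ps. improving_seq k V E w ps L}"
  have bounded: "?S \<subseteq> {..<2 ^ card E}"
    using improving_seq_length_less[OF E] by blast
  have "improving_seq k V E w (\<lambda>_. restrict (\<lambda>_. 0) V) 0"
    unfolding improving_seq_def kpartitions_def using k by auto
  then have "?S \<noteq> {}" by blast
  with bounded have "max_iterations k V E w \<in> ?S"
    unfolding max_iterations_def by (metis Max_in cSup_eq_Max finite_lessThan finite_subset)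
  with bounded show "\<exists>ps. improving_seq k V E w ps (max_iterations k V E w)"
    and "max_iterations k V E w < 2 ^ card E" by auto
qed

lemma improving_seq_small_gain:
  assumes w: "\<forall>e\<in>E. \<bar>w e\<bar> \<le> 1" and seq: "improving_seq k V E w ps L" and L: "0 < L"
  obtains c where "c \<in> flip_gain_forms V E"
    and "0 < (\<Sum>e\<in>E. c e * w e)" "(\<Sum>e\<in>E. c e * w e) \<le> real (card E) / real L"
proof -
  define gain where "gain i = cut_weight E w (ps (Suc i)) - cut_weight E w (ps i)" for i
  have "Min (gain ` {..<L}) \<in> gain ` {..<L}" using L by (intro Min_in) auto
  then obtain i\<^sub>0 where i\<^sub>0: "i\<^sub>0 < L" and "gain i\<^sub>0 = Min (gain ` {..<L})"
    by (metis imageE lessThan_iff)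
  then have min: "gain i\<^sub>0 \<le> gain i" if "i < L" for i
    using that by simp
  have "real L * gain i\<^sub>0 = (\<Sum>i<L. gain i\<^sub>0)" by simp
  also have "\<dots> \<le> (\<Sum>i<L. gain i)" by (intro sum_mono min) simp
  also have "\<dots> = cut_weight E w (ps L) - cut_weight E w (ps 0)"
    unfolding gain_def by (rule sum_lessThan_telescope)
  also have "\<dots> \<le> real (card E)" by (rule cut_weight_diff_le_card[OF w])
  finally have "gain i\<^sub>0 \<le> real (card E) / real L" using L by (simp add: field_simps)
  moreover have "0 < gain i\<^sub>0" using seq i\<^sub>0 unfolding improving_seq_def gain_def by auto
  moreover obtain c where "c \<in> flip_gain_forms V E" "gain i\<^sub>0 = (\<Sum>e\<in>E. c e * w e)"
    using flip_nbr_gain_in_flip_gain_forms seq i\<^sub>0 unfolding improving_seq_def gain_def by metis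
  ultimately show ?thesis using that by simp
qed

lemma le_sum_dyadic_powers:
  fixes T :: nat
  assumes "T < 2 ^ m"
  shows "T \<le> (\<Sum>j<m. if 2 ^ j \<le> T then 2 ^ j else 0)"
  using assms
proof (induction m)
  case (Suc m)
  show ?case
  proof (cases "T < 2 ^ m")
    case False
    then have "(\<Sum>j<m. if 2 ^ j \<le> T then 2 ^ j else 0) = (\<Sum>j<m. (2::nat) ^ j)"
      by (intro sum.cong refl) (auto intro: order_trans[OF power_increasing[of _ m "2::nat"]])
    also have "\<dots> = 2 ^ m - 1" using sum_power2[of m] by (simp add: atLeast0LessThan)
    finally show ?thesis using False Suc.prems by simp
  qed (use Suc in simp)
qed simp

lemma max_iterations_le_sum_indicators:
  assumes G: "simple_graph V E" and k: "0 < k" and w: "\<forall>e\<in>E. \<bar>w e\<bar> \<le> 1"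
  shows "real (max_iterations k V E w) \<le> (\<Sum>c\<in>flip_gain_forms V E. \<Sum>j<card E.
    2 ^ j * indicator {0<..real (card E) / 2 ^ j} (\<Sum>e\<in>E. c e * w e))"
    (is "_ \<le> (\<Sum>c\<in>_. ?h c)")
proof -
  define T where "T = max_iterations k V E w"
  have E: "finite E" using finite_simple_graph_edges[OF G] .
  have h_nonneg: "0 \<le> ?h c" for c by (intro sum_nonneg) auto
  show ?thesis
  proof (cases "T = 0")
    case True then show ?thesis by (simp add: T_def[symmetric] sum_nonneg h_nonneg)
  next
    case False
    obtain ps where "improving_seq k V E w ps T"
      using improving_seq_max_iterations[OF E k] unfolding T_def by blast
    then obtain c where c: "c \<in> flip_gain_forms V E" "0 < (\<Sum>e\<in>E. c e * w e)"
      "(\<Sum>e\<in>E. c e * w e) \<le> real (card E) / real T"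
      using improving_seq_small_gain[OF w] False by blast
    have "T \<le> (\<Sum>j<card E. if 2 ^ j \<le> T then 2 ^ j else 0)"
      using le_sum_dyadic_powers max_iterations_less[OF E k] unfolding T_def by blast
    then have "real T \<le> (\<Sum>j<card E. real (if 2 ^ j \<le> T then 2 ^ j else 0))"
      by (metis of_nat_le_iff of_nat_sum)
    also have "\<dots> = (\<Sum>j<card E. if 2 ^ j \<le> T then 2 ^ j else 0)"
      by (intro sum.cong) auto
    also have "\<dots> \<le> ?h c"
    proof (intro sum_mono)
      fix j
      have "real (card E) / real T \<le> real (card E) / 2 ^ j" if "2 ^ j \<le> T"
        using that False by (intro divide_left_mono) (auto simp flip: of_nat_le_iff)
      with c show "(if 2 ^ j \<le> T then 2 ^ j else 0 :: real) \<le>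
          2 ^ j * indicator {0<..real (card E) / 2 ^ j} (\<Sum>e\<in>E. c e * w e)"
        by (auto simp: indicator_def)
    qed
    also have "\<dots> \<le> (\<Sum>c\<in>flip_gain_forms V E. ?h c)"
      by (rule member_le_sum[OF c(1) h_nonneg finite_flip_gain_forms[OF G]])
    finally show ?thesis unfolding T_def .
  qed
qed

section \<open>Expected number of iterations\<close>

lemma nn_integral_max_iterations_le:
  fixes N :: "nat set \<Rightarrow> real measure"
  assumes G: "simple_graph V E" and k: "0 < k"
    and N: "\<And>i. prob_space (N i)" "\<And>i. sets (N i) = sets borel"
    and Ne: "\<And>e. e \<in> E \<Longrightarrow> N e = density lborel (\<lambda>x. ennreal (f e x))"
    and f: "\<forall>e\<in>E. bounded_density \<phi> (f e)"
  shows "(\<integral>\<^sup>+ w. ennreal (real (max_iterations k V E w)) \<partial>PiM E N)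
    \<le> of_nat (card (flip_gain_forms V E) * card E) * ennreal (\<phi> * real (card E))"
proof -
  let ?m = "card E"
  let ?I = "\<lambda>c j w. indicator {0<..real ?m / 2 ^ j} (\<Sum>e\<in>E. c e * w e) :: ennreal"
  have E: "finite E" using finite_simple_graph_edges[OF G] .
  have [measurable]: "?I c j \<in> borel_measurable (PiM E N)" for c j
    by (rule measurable_compose[OF borel_measurable_linear_form_PiM[OF N(2)]]) simp
  have "AE w in PiM E N. \<forall>e\<in>E. \<bar>w e\<bar> \<le> 1"
    using E N(1) Ne f by (rule AE_PiM_bounded_density_abs_le_1)
  then have "AE w in PiM E N. ennreal (real (max_iterations k V E w))
      \<le> (\<Sum>c\<in>flip_gain_forms V E. \<Sum>j<?m. ennreal (2 ^ j) * ?I c j w)"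
  proof eventually_elim
    case (elim w)
    have "ennreal (real (max_iterations k V E w)) \<le> ennreal (\<Sum>c\<in>flip_gain_forms V E. \<Sum>j<?m.
        2 ^ j * indicator {0<..real ?m / 2 ^ j} (\<Sum>e\<in>E. c e * w e))"
      using max_iterations_le_sum_indicators[OF G k elim] by (rule ennreal_leI)
    also have "\<dots> = (\<Sum>c\<in>flip_gain_forms V E. \<Sum>j<?m. ennreal (2 ^ j) * ?I c j w)"
      by (simp add: ennreal_mult ennreal_indicator sum_nonneg flip: sum_ennreal)
    finally show ?case .
  qed
  then have "(\<integral>\<^sup>+ w. ennreal (real (max_iterations k V E w)) \<partial>PiM E N)
      \<le> (\<integral>\<^sup>+ w. (\<Sum>c\<in>flip_gain_forms V E. \<Sum>j<?m. ennreal (2 ^ j) * ?I c j w) \<partial>PiM E N)"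
    by (rule nn_integral_mono_AE)
  also have "\<dots> = (\<Sum>c\<in>flip_gain_forms V E.
      \<integral>\<^sup>+ w. (\<Sum>j<?m. ennreal (2 ^ j) * ?I c j w) \<partial>PiM E N)"
    by (rule nn_integral_sum) measurable
  also have "\<dots> = (\<Sum>c\<in>flip_gain_forms V E. \<Sum>j<?m.
      ennreal (2 ^ j) * (\<integral>\<^sup>+ w. ?I c j w \<partial>PiM E N))"
    by (intro sum.cong refl trans[OF nn_integral_sum] nn_integral_cmult) measurable
  also have "\<dots> \<le> (\<Sum>c\<in>flip_gain_forms V E. \<Sum>j<?m. ennreal (2 ^ j) * ennreal (\<phi> * (?m / 2 ^ j)))"
    by (intro sum_mono mult_left_mono
        nn_integral_PiM_signed_form_interval_le[OF E flip_gain_forms_range N Ne f]) simp_all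
  also have "\<dots> = (\<Sum>c\<in>flip_gain_forms V E. \<Sum>j<?m. ennreal (\<phi> * ?m))"
    by (simp flip: ennreal_mult')
  finally show ?thesis by (simp add: mult.assoc)
qed

lemma of_nat_mult_ennreal_le:
  fixes a b :: nat
  assumes "a \<le> b"
  shows "of_nat a * ennreal x \<le> ennreal (real b * x)"
proof (cases "0 \<le> x")
  case True
  then have "of_nat a * ennreal x = ennreal (real a * x)"
    by (simp add: ennreal_of_nat_eq_real_of_nat ennreal_mult)
  also have "\<dots> \<le> ennreal (real b * x)"
    using assms True by (intro ennreal_leI mult_right_mono) auto
  finally show ?thesis .
qed (simp add: ennreal_neg)

theorem mainTheorem12:
  shows "\<exists>C>0. \<forall>(k::nat) (V::nat set) (E::nat set set) (\<phi>::real) (f::nat set \<Rightarrow> real \<Rightarrow> real).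
     k \<ge> 2 \<longrightarrow> simple_graph V E \<longrightarrow> (\<forall>e\<in>E. bounded_density \<phi> (f e)) \<longrightarrow>
     (\<integral>\<^sup>+ w. ennreal (real (max_iterations k V E w)) \<partial>(weight_distr E f))
       \<le> ennreal (C * 3 ^ max_degree V E * real (card V) * real (card E) ^ 2 * \<phi>)"
proof (intro exI[of _ 1] conjI allI impI)
  fix k :: nat and V E \<phi> and f :: "nat set \<Rightarrow> real \<Rightarrow> real"
  assume k: "2 \<le> k" and G: "simple_graph V E" and f: "\<forall>e\<in>E. bounded_density \<phi> (f e)"
  text \<open>Off E the factors are irrelevant; a point mass makes them probability spaces.\<close>
  define N where "N e = (if e \<in> E then density lborel (\<lambda>x. ennreal (f e x)) else return borel 0)"
    for e
  have N: "prob_space (N i)" "sets (N i) = sets borel" for i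
    using f prob_space_density_bounded prob_space_return[of 0 borel] unfolding N_def by auto
  have NE: "N e = density lborel (\<lambda>x. ennreal (f e x))" if "e \<in> E" for e
    using that unfolding N_def by simp
  have "weight_distr E f = PiM E N"
    unfolding weight_distr_def by (rule PiM_cong) (simp_all add: NE)
  then have "(\<integral>\<^sup>+ w. ennreal (real (max_iterations k V E w)) \<partial>weight_distr E f)
      \<le> of_nat (card (flip_gain_forms V E) * card E) * ennreal (\<phi> * real (card E))"
    using nn_integral_max_iterations_le[OF G _ N NE f] k by simp
  also have "\<dots> \<le> ennreal (real (card V * 3 ^ max_degree V E * card E) * (\<phi> * real (card E)))"
    using card_flip_gain_forms_le[OF G] by (intro of_nat_mult_ennreal_le) simp
  also have "\<dots> = ennreal (1 * 3 ^ max_degree V E * real (card V) * real (card E) ^ 2 * \<phi>)"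
    by (simp add: power2_eq_square mult_ac)
  finally show "(\<integral>\<^sup>+ w. ennreal (real (max_iterations k V E w)) \<partial>weight_distr E f)
      \<le> ennreal (1 * 3 ^ max_degree V E * real (card V) * real (card E) ^ 2 * \<phi>)" .
qed simp

end
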